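(* Let $n\ge 2$ and let $\Delta^c(SD_{8n})$ be the conjugacy super commuting graph of the semidihedral group $SD_{8n}$. (i) If $n$ is odd, the Sombor spectrum of $\Delta^c(SD_{8n})$ consists of $-(8n-1)\sqrt2$ with multiplicity $3$, $-(4n-1)\sqrt2$ with multiplicity $4n-5$, $-(4n+3)\sqrt2$ with multiplicity $4n-1$, and the three roots (with multiplicity) of \[\big(x-3(8n-1)\sqrt2\big)\big(x-(4n-1)(4n-5)\sqrt2\big)\big(x-(4n-1)(4n+3)\sqrt2\big)-32(n-1)(40n^2-12n+1)\big(x-(4n-1)(4n+3)\sqrt2\big)-32n(40n^2+4n+5)\big(x-(4n-5)(4n-1)\sqrt2\big).\] (ii) If $n$ is even, the Sombor spectrum of $\Delta^c(SD_{8n})$ consists of $-(2n+1)\sqrt2$ with multiplicity $4n-2$, $-(4n-1)\sqrt2$ with multiplicity $4n-3$, $-(8n-1)\sqrt2$ with multiplicity $1$, and the four roots (with multiplicity) of \[\big(x-(8n-1)\sqrt2\big)\big(x-(4n-1)(4n-3)\sqrt2\big)\big(x-(2n-1)(2n+1)\sqrt2\big)^2-8(2n-1)(40n^2-12n+1)\big(x-(2n-1)(2n+1)\sqrt2\big)^2-16n(34n^2-6n+1)\big(x-(4n-3)(4n-1)\sqrt2\big)\big(x-(2n-1)(2n+1)\sqrt2\big).\]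
   Context: For a finite simple graph $\Gamma$ with vertices $u_1,\dots,u_N$, the Sombor matrix $S(\Gamma)$ has $(i,j)$ entry $\sqrt{\deg(u_i)^2+\deg(u_j)^2}$ if $u_i,u_j$ are adjacent and $0$ otherwise; the Sombor spectrum is the multiset of its eigenvalues. $SD_{8n}=\langle a,b: a^{4n}=b^2=e,\ ba=a^{2n-1}b\rangle$. The conjugacy super commuting graph $\Delta^c(G)$ has vertex set $G$, and distinct $g,h$ are adjacent iff $g,h$ are conjugate in $G$ or there exist distinct $g'$ conjugate to $g$ and $h'$ conjugate to $h$ with $g'h'=h'g'$. *)

theory Defs
  imports "Jordan_Normal_Form.Determinant" "Jordan_Normal_Form.Char_Poly"
    "HOL-Computational_Algebra.Polynomial" "HOL-Library.Product_Lexorder"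
begin

text \<open>Element (i,j) with i < 4n, j < 2 represents the normal form a^i b^j.
  Using b a = a^(2n-1) b (so b a^k = a^(k(2n-1)) b) one gets
  (a^i b^j)(a^k b^l) = a^(i + k (2n-1)^j) b^(j+l).\<close>

definition sd_carrier :: "nat \<Rightarrow> (nat \<times> nat) set" where
  "sd_carrier n = {0..<4*n} \<times> {0..<2}"

definition sd_mult :: "nat \<Rightarrow> nat \<times> nat \<Rightarrow> nat \<times> nat \<Rightarrow> nat \<times> nat" where
  "sd_mult n g h = ((fst g + fst h * (2*n - 1) ^ snd g) mod (4*n),
                    (snd g + snd h) mod 2)"

definition sd_conj :: "nat \<Rightarrow> nat \<times> nat \<Rightarrow> nat \<times> nat \<Rightarrow> bool" where
  "sd_conj n g h \<longleftrightarrow> (\<exists>x\<in>sd_carrier n. sd_mult n h x = sd_mult n x g)"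

definition sd_csc_adj :: "nat \<Rightarrow> nat \<times> nat \<Rightarrow> nat \<times> nat \<Rightarrow> bool" where
  "sd_csc_adj n g h \<longleftrightarrow> g \<in> sd_carrier n \<and> h \<in> sd_carrier n \<and> g \<noteq> h \<and>
     (sd_conj n g h \<or>
      (\<exists>g'\<in>sd_carrier n. \<exists>h'\<in>sd_carrier n. g' \<noteq> h' \<and> sd_conj n g g' \<and> sd_conj n h h'
           \<and> sd_mult n g' h' = sd_mult n h' g'))"

text \<open>A graph is given by a list of its (distinct) vertices u_1..u_N and an adjacency relation.\<close>
definition graph_deg :: "'v list \<Rightarrow> ('v \<Rightarrow> 'v \<Rightarrow> bool) \<Rightarrow> 'v \<Rightarrow> nat" where
  "graph_deg vs adj v = card {w \<in> set vs. adj v w}"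

definition sombor_matrix :: "'v list \<Rightarrow> ('v \<Rightarrow> 'v \<Rightarrow> bool) \<Rightarrow> real mat" where
  "sombor_matrix vs adj = mat (length vs) (length vs)
     (\<lambda>(i,j). if adj (vs!i) (vs!j)
              then sqrt ((real (graph_deg vs adj (vs!i)))^2 + (real (graph_deg vs adj (vs!j)))^2)
              else 0)"

definition sombor_spectrum :: "'v list \<Rightarrow> ('v \<Rightarrow> 'v \<Rightarrow> bool) \<Rightarrow> complex multiset" where
  "sombor_spectrum vs adj = proots (map_poly complex_of_real (char_poly (sombor_matrix vs adj)))"

definition csc_SD_vertices :: "nat \<Rightarrow> (nat \<times> nat) list" where
  "csc_SD_vertices n = sorted_list_of_set (sd_carrier n)"

end

theory Submission
  imports Defs
begin

(* A vertex of the conjugacy super commuting graph of SD_8n is adjacent to every other vertex if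
   it is central, and otherwise exactly to the central vertices and to the vertices of its own
   block: the non-central rotations, or the reflections a^i b (for even n split by the parity of
   i). Hence the Sombor matrix M has zero diagonal and is constant on blocks. Writing x I - M as a
   diagonal matrix minus a matrix of rank equal to the number of blocks, the matrix determinant
   lemma shows that the spectrum consists of -w_t with multiplicity |block t| - 1, where w_t is
   the Sombor weight inside block t, together with the eigenvalues of the 3 x 3 (odd n) or 4 x 4
   (even n) quotient matrix. The quotient matrix is an arrowhead matrix, and its characteristic
   polynomial is the stated cubic or quartic. *)

(* Both products below equal the block matrix [[A, U], [V, 1]]. *)
lemma det_minus_mult_eq:
  fixes A :: "'a::field mat"
  assumes A: "A \<in> carrier_mat N N" and U: "U \<in> carrier_mat N k" and V: "V \<in> carrier_mat k N"
    and B: "B \<in> carrier_mat N k" and AB: "A * B = U"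
  shows "det (A - U * V) = det A * det (1\<^sub>m k - V * B)"
proof -
  let ?L1 = "four_block_mat (A - U * V) U (0\<^sub>m k N) (1\<^sub>m k)"
  let ?R1 = "four_block_mat (1\<^sub>m N) (0\<^sub>m N k) V (1\<^sub>m k)"
  let ?L2 = "four_block_mat A (0\<^sub>m N k) V (1\<^sub>m k - V * B)"
  let ?R2 = "four_block_mat (1\<^sub>m N) B (0\<^sub>m k N) (1\<^sub>m k)"
  have UV: "U * V \<in> carrier_mat N N" and VB: "V * B \<in> carrier_mat k k"
    and AUV: "A - U * V \<in> carrier_mat N N" and IVB: "1\<^sub>m k - V * B \<in> carrier_mat k k"
    using A U V B by auto
  have "(A - U * V) * 1\<^sub>m N + U * V = A"
    using A UV by (intro eq_matI) (auto simp del: index_mult_mat)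
  moreover have "V * B + (1\<^sub>m k - V * B) * 1\<^sub>m k = 1\<^sub>m k"
    using VB by (intro eq_matI) (auto simp del: index_mult_mat)
  ultimately have "?L1 * ?R1 = ?L2 * ?R2"
    using A U V B AB
    by (simp add: mult_four_block_mat[OF AUV U zero_carrier_mat one_carrier_mat
          one_carrier_mat zero_carrier_mat V one_carrier_mat]
        mult_four_block_mat[OF A zero_carrier_mat V IVB one_carrier_mat B zero_carrier_mat one_carrier_mat])
  moreover have "det (?L1 * ?R1) = det (A - U * V)"
    using A U V AUV
    by (subst det_mult[of _ "N + k"])
      (auto simp: det_four_block_mat_lower_left_zero[of _ N _ k] det_four_block_mat_upper_right_zero[of _ N _ k])
  moreover have "det (?L2 * ?R2) = det A * det (1\<^sub>m k - V * B)"
    using A B V IVB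
    by (subst det_mult[of _ "N + k"])
      (auto simp: det_four_block_mat_lower_left_zero[of _ N _ k] det_four_block_mat_upper_right_zero[of _ N _ k])
  ultimately show ?thesis by simp
qed

lemma det_mat_diag: "det (mat_diag n f) = (\<Prod>i<n. f i)"
  by (subst det_upper_triangular[of _ n])
    (auto simp: mat_diag_def upper_triangular_def prod_list_diag_prod lessThan_atLeast0)

lemma det_mat_diag_classwise:
  fixes c :: "nat \<Rightarrow> nat"
  assumes "\<And>i. i < N \<Longrightarrow> c i < k"
  shows "det (mat_diag N (\<lambda>i. f (c i))) = (\<Prod>t<k. f t ^ card {i. i < N \<and> c i = t})"
proof -
  have "det (mat_diag N (\<lambda>i. f (c i))) = (\<Prod>t<k. \<Prod>i\<in>{i\<in>{..<N}. c i = t}. f (c i))"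
    unfolding det_mat_diag by (rule prod.group[symmetric]) (use assms in auto)
  also have "\<dots> = (\<Prod>t<k. f t ^ card {i. i < N \<and> c i = t})"
    by (intro prod.cong) auto
  finally show ?thesis .
qed

lemma poly_eqI_cofinite:
  fixes p q :: "'a::{idom, ring_char_0} poly"
  assumes "finite S" and "\<And>x. x \<notin> S \<Longrightarrow> poly p x = poly q x"
  shows "p = q"
proof (rule ccontr)
  assume "p \<noteq> q"
  then have "finite {x. poly (p - q) x = 0}"
    by (intro poly_roots_finite) simp
  moreover have "UNIV \<subseteq> {x. poly (p - q) x = 0} \<union> S"
    using assms(2) by auto
  ultimately show False
    using assms(1) infinite_UNIV_char_0 finite_subset by blast
qed

(* Right multiplication by E subtracts multiples of the later columns from column 0 and leaves
   an upper triangular matrix. *)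
lemma det_arrowhead_schur:
  fixes A :: "'a::field mat"
  assumes A: "A \<in> carrier_mat k k" and "0 < k"
    and zero: "\<And>i j. i < k \<Longrightarrow> j < k \<Longrightarrow> 0 < i \<Longrightarrow> 0 < j \<Longrightarrow> i \<noteq> j \<Longrightarrow> A $$ (i, j) = 0"
    and diag: "\<And>j. 0 < j \<Longrightarrow> j < k \<Longrightarrow> A $$ (j, j) \<noteq> 0"
  shows "det A = (A $$ (0, 0) - (\<Sum>l\<in>{1..<k}. A $$ (0, l) * A $$ (l, 0) / A $$ (l, l)))
    * (\<Prod>i\<in>{1..<k}. A $$ (i, i))"
proof -
  define E where "E = mat k k (\<lambda>(i, j). if i = j then 1 else if j = 0 then - A $$ (i, 0) / A $$ (i, i) else 0)"
  define a where "a = A $$ (0, 0) - (\<Sum>l\<in>{1..<k}. A $$ (0, l) * A $$ (l, 0) / A $$ (l, l))"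
  have E: "E \<in> carrier_mat k k" unfolding E_def by simp
  have split: "{0..<k} = insert 0 {1..<k}" using \<open>0 < k\<close> by auto
  have nonzero: "{1..<k} \<inter> - {0} = {1..<k}" by auto
  have "det E = 1"
    using det_lower_triangular[OF _ E] by (simp add: E_def prod_list_diag_prod)
  have AE: "(A * E) $$ (i, j) = (if j = 0 then if i = 0 then a else 0 else A $$ (i, j))"
    if "i < k" "j < k" for i j
  proof -
    have "(A * E) $$ (i, j) = (\<Sum>l\<in>{0..<k}. A $$ (i, l) * E $$ (l, j))"
      using A E that by (simp add: scalar_prod_def)
    also have "\<dots> = (if j = 0 then A $$ (i, 0) - (\<Sum>l\<in>{1..<k}. A $$ (i, l) * A $$ (l, 0) / A $$ (l, l))
        else A $$ (i, j))"
      using that nonzero by (auto simp: E_def split sum_negf if_distrib[of "(*) _"] sum.If_cases cong: if_cong)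
    also have "\<dots> = (if j = 0 then if i = 0 then a else 0 else A $$ (i, j))"
    proof (cases "j = 0 \<and> i \<noteq> 0")
      case True
      then have "(\<Sum>l\<in>{1..<k}. A $$ (i, l) * A $$ (l, 0) / A $$ (l, l)) = A $$ (i, 0)"
        using that zero diag by (subst sum.remove[of _ i]) (auto intro!: sum.neutral)
      then show ?thesis using True by simp
    qed (auto simp: a_def)
    finally show ?thesis .
  qed
  have "det A = det (A * E)"
    using det_mult[OF A E] \<open>det E = 1\<close> by simp
  also have "\<dots> = (\<Prod>i\<in>{0..<k}. (A * E) $$ (i, i))"
    using A E AE zero by (subst det_upper_triangular[of _ k]) (auto simp: upper_triangular_def prod_list_diag_prod)
  also have "\<dots> = a * (\<Prod>i\<in>{1..<k}. A $$ (i, i))"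
    using AE \<open>0 < k\<close> by (simp add: split)
  finally show ?thesis
    unfolding a_def .
qed

lemma det_arrowhead:
  fixes A :: "'a::field mat"
  assumes A: "A \<in> carrier_mat k k"
    and zero: "\<And>i j. i < k \<Longrightarrow> j < k \<Longrightarrow> 0 < i \<Longrightarrow> 0 < j \<Longrightarrow> i \<noteq> j \<Longrightarrow> A $$ (i, j) = 0"
    and diag: "\<And>j. 0 < j \<Longrightarrow> j < k \<Longrightarrow> A $$ (j, j) \<noteq> 0"
  shows "det A = (\<Prod>j<k. A $$ (j, j))
    - (\<Sum>j\<in>{1..<k}. A $$ (0, j) * A $$ (j, 0) * (\<Prod>i\<in>{1..<k} - {j}. A $$ (i, i)))"
proof (cases "k = 0")
  case True
  then show ?thesis using A by simp
next
  case False
  have "A $$ (0, l) * A $$ (l, 0) / A $$ (l, l) * (\<Prod>i\<in>{1..<k}. A $$ (i, i))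
      = A $$ (0, l) * A $$ (l, 0) * (\<Prod>i\<in>{1..<k} - {l}. A $$ (i, i))" if "l \<in> {1..<k}" for l
    using that diag by (subst prod.remove[of _ l]) auto
  moreover have "{..<k} = insert 0 {1..<k}"
    using False by auto
  ultimately show ?thesis
    using False by (simp add: det_arrowhead_schur[OF A _ zero diag] left_diff_distrib sum_distrib_right)
qed

lemma char_poly_arrowhead:
  fixes Q :: "'a::field_char_0 mat"
  assumes Q: "Q \<in> carrier_mat k k"
    and zero: "\<And>i j. i < k \<Longrightarrow> j < k \<Longrightarrow> 0 < i \<Longrightarrow> 0 < j \<Longrightarrow> i \<noteq> j \<Longrightarrow> Q $$ (i, j) = 0"
  shows "char_poly Q = (\<Prod>j<k. [:- Q $$ (j, j), 1:])
    - (\<Sum>j\<in>{1..<k}. Polynomial.smult (Q $$ (0, j) * Q $$ (j, 0)) (\<Prod>i\<in>{1..<k} - {j}. [:- Q $$ (i, i), 1:]))"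
proof (rule poly_eqI_cofinite)
  show "finite ((\<lambda>j. Q $$ (j, j)) ` {1..<k})" by simp
  fix x assume x: "x \<notin> (\<lambda>j. Q $$ (j, j)) ` {1..<k}"
  have "poly (char_poly Q) x = det (- char_matrix Q x)"
    by (rule char_poly_matrix[OF Q])
  also have "\<dots> = (\<Prod>j<k. x - Q $$ (j, j))
      - (\<Sum>j\<in>{1..<k}. Q $$ (0, j) * Q $$ (j, 0) * (\<Prod>i\<in>{1..<k} - {j}. x - Q $$ (i, i)))"
    using Q zero x
    by (subst det_arrowhead[of _ k]) (auto simp: char_matrix_def intro!: sum.cong prod.cong)
  finally show "poly (char_poly Q) x = poly ((\<Prod>j<k. [:- Q $$ (j, j), 1:])
    - (\<Sum>j\<in>{1..<k}. Polynomial.smult (Q $$ (0, j) * Q $$ (j, 0)) (\<Prod>i\<in>{1..<k} - {j}. [:- Q $$ (i, i), 1:]))) x"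
    by (simp add: poly_sum poly_prod)
qed

lemma poly_char_poly_arrowhead_3:
  fixes Q :: "'a::field_char_0 mat"
  assumes Q: "Q \<in> carrier_mat 3 3" and "Q $$ (1, 2) = 0" "Q $$ (2, 1) = 0"
  shows "poly (char_poly Q) x = (x - Q $$ (0, 0)) * (x - Q $$ (1, 1)) * (x - Q $$ (2, 2))
    - Q $$ (0, 1) * Q $$ (1, 0) * (x - Q $$ (2, 2)) - Q $$ (0, 2) * Q $$ (2, 0) * (x - Q $$ (1, 1))"
proof -
  have zero: "Q $$ (i, j) = 0" if "i < 3" "j < 3" "0 < i" "0 < j" "i \<noteq> j" for i j
  proof -
    have "i = 1 \<or> i = 2" "j = 1 \<or> j = 2"
      using that by auto
    then show ?thesis
      using that assms(2,3) by auto
  qed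
  have "{..<3::nat} = {0, 1, 2}" "{1..<3::nat} = {1, 2}"
    by auto
  then show ?thesis
    by (simp add: char_poly_arrowhead[OF Q zero] poly_sum poly_prod insert_Diff_if algebra_simps)
qed

lemma poly_char_poly_arrowhead_4:
  fixes Q :: "'a::field_char_0 mat"
  assumes Q: "Q \<in> carrier_mat 4 4"
    and "Q $$ (1, 2) = 0" "Q $$ (1, 3) = 0" "Q $$ (2, 1) = 0" "Q $$ (2, 3) = 0" "Q $$ (3, 1) = 0" "Q $$ (3, 2) = 0"
  shows "poly (char_poly Q) x = (x - Q $$ (0, 0)) * (x - Q $$ (1, 1)) * (x - Q $$ (2, 2)) * (x - Q $$ (3, 3))
    - Q $$ (0, 1) * Q $$ (1, 0) * (x - Q $$ (2, 2)) * (x - Q $$ (3, 3))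
    - Q $$ (0, 2) * Q $$ (2, 0) * (x - Q $$ (1, 1)) * (x - Q $$ (3, 3))
    - Q $$ (0, 3) * Q $$ (3, 0) * (x - Q $$ (1, 1)) * (x - Q $$ (2, 2))"
proof -
  have zero: "Q $$ (i, j) = 0" if "i < 4" "j < 4" "0 < i" "0 < j" "i \<noteq> j" for i j
  proof -
    have "i = 1 \<or> i = 2 \<or> i = 3" "j = 1 \<or> j = 2 \<or> j = 3"
      using that by auto
    then show ?thesis
      using that assms(2-7) by auto
  qed
  have "{..<4::nat} = {0, 1, 2, 3}" "{1..<4::nat} = {1, 2, 3}"
    by auto
  then show ?thesis
    by (simp add: char_poly_arrowhead[OF Q zero] poly_sum poly_prod insert_Diff_if algebra_simps)
qed

definition class_indicator_mat :: "nat \<Rightarrow> nat \<Rightarrow> (nat \<Rightarrow> nat) \<Rightarrow> 'a::zero_neq_one mat" where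
  "class_indicator_mat N k c = mat N k (\<lambda>(i, t). if c i = t then 1 else 0)"

lemma classwise_mat_eq:
  fixes W :: "nat \<Rightarrow> nat \<Rightarrow> 'a::comm_ring_1"
  assumes c: "\<And>i. i < N \<Longrightarrow> c i < k"
  shows "mat N N (\<lambda>(i, j). if i = j then 0 else W (c i) (c j))
    = class_indicator_mat N k c * mat k N (\<lambda>(t, j). W t (c j)) - mat_diag N (\<lambda>i. W (c i) (c i))"
proof (rule eq_matI)
  fix i j assume "i < dim_row (class_indicator_mat N k c * mat k N (\<lambda>(t, j). W t (c j))
    - mat_diag N (\<lambda>i. W (c i) (c i)))" "j < dim_col (class_indicator_mat N k c * mat k N (\<lambda>(t, j). W t (c j))
    - mat_diag N (\<lambda>i. W (c i) (c i)))"
  then have ij: "i < N" "j < N"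
    by (simp_all add: class_indicator_mat_def mat_diag_def)
  have "(\<Sum>t\<in>{0..<k}. (if c i = t then 1 else 0) * W t (c j)) = (\<Sum>t\<in>{0..<k}. if c i = t then W t (c j) else 0)"
    by (intro sum.cong) auto
  then show "mat N N (\<lambda>(i, j). if i = j then 0 else W (c i) (c j)) $$ (i, j)
    = (class_indicator_mat N k c * mat k N (\<lambda>(t, j). W t (c j)) - mat_diag N (\<lambda>i. W (c i) (c i))) $$ (i, j)"
    using ij c[OF ij(1)] by (simp add: class_indicator_mat_def mat_diag_def scalar_prod_def)
qed (simp_all add: class_indicator_mat_def mat_diag_def)

lemma mult_classwise_cols:
  fixes f :: "nat \<Rightarrow> nat \<Rightarrow> 'a::comm_semiring_1" and g :: "nat \<Rightarrow> 'a"
  shows "mat k N (\<lambda>(t, j). f t (c j)) * mat N k (\<lambda>(i, u). if c i = u then g u else 0)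
    = mat k k (\<lambda>(t, u). f t u * g u * of_nat (card {i. i < N \<and> c i = u}))"
proof (rule eq_matI)
  fix t u assume "t < dim_row (mat k k (\<lambda>(t, u). f t u * g u * of_nat (card {i. i < N \<and> c i = u})))"
    "u < dim_col (mat k k (\<lambda>(t, u). f t u * g u * of_nat (card {i. i < N \<and> c i = u})))"
  then have "t < k" "u < k"
    by simp_all
  moreover have "(\<Sum>j\<in>{0..<N}. f t (c j) * (if c j = u then g u else 0)) = (\<Sum>j\<in>{j\<in>{0..<N}. c j = u}. f t u * g u)"
    by (subst sum.inter_filter) (auto intro: sum.cong)
  moreover have "{j\<in>{0..<N}. c j = u} = {i. i < N \<and> c i = u}"
    by auto
  ultimately show "(mat k N (\<lambda>(t, j). f t (c j)) * mat N k (\<lambda>(i, u). if c i = u then g u else 0)) $$ (t, u)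
    = mat k k (\<lambda>(t, u). f t u * g u * of_nat (card {i. i < N \<and> c i = u})) $$ (t, u)"
    by (simp add: scalar_prod_def ac_simps)
qed simp_all

(* For a matrix with zero diagonal whose (i, j) entry is W (c i) (c j), the partition of the
   indices by c is equitable: a row of class t has sum W t u * s u over the columns of class u,
   minus W t t when u = t. This is the quotient matrix of that partition. *)
definition class_quotient_mat :: "nat \<Rightarrow> (nat \<Rightarrow> nat \<Rightarrow> 'a::field) \<Rightarrow> (nat \<Rightarrow> nat) \<Rightarrow> 'a mat" where
  "class_quotient_mat k W s = mat k k (\<lambda>(t, u). W t u * of_nat (s u) - (if t = u then W t t else 0))"

lemma class_quotient_char_matrix:
  fixes W :: "nat \<Rightarrow> nat \<Rightarrow> 'a::field"
  assumes x: "\<And>t. t < k \<Longrightarrow> x + W t t \<noteq> 0"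
  shows "(1\<^sub>m k - mat k k (\<lambda>(t, u). W t u * (1 / (x + W u u)) * of_nat (s u))) * mat_diag k (\<lambda>t. x + W t t)
    = - char_matrix (class_quotient_mat k W s) x"
proof (rule eq_matI)
  fix t u assume "t < dim_row (- char_matrix (class_quotient_mat k W s) x)"
    "u < dim_col (- char_matrix (class_quotient_mat k W s) x)"
  then have tu: "t < k" "u < k"
    by (simp_all add: char_matrix_def class_quotient_mat_def)
  with x have "W t u * (1 / (x + W u u)) * of_nat (s u) * (x + W u u) = W t u * of_nat (s u)"
    by simp
  with tu show "((1\<^sub>m k - mat k k (\<lambda>(t, u). W t u * (1 / (x + W u u)) * of_nat (s u)))
      * mat_diag k (\<lambda>t. x + W t t)) $$ (t, u) = (- char_matrix (class_quotient_mat k W s) x) $$ (t, u)"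
    by (subst mat_diag_mult_right[of _ k])
      (auto simp: char_matrix_def class_quotient_mat_def left_diff_distrib)
qed (simp_all add: mat_diag_def char_matrix_def class_quotient_mat_def)

(* x I - M is a diagonal matrix minus the product U V of rank at most k, so the matrix
   determinant lemma reduces its determinant to a k x k one. *)
lemma poly_char_poly_classwise:
  fixes W :: "nat \<Rightarrow> nat \<Rightarrow> 'a::field" and c :: "nat \<Rightarrow> nat" and N :: nat
  defines "s \<equiv> \<lambda>t. card {i. i < N \<and> c i = t}"
  assumes c: "\<And>i. i < N \<Longrightarrow> c i < k" and s: "\<And>t. t < k \<Longrightarrow> s t \<noteq> 0"
    and x: "\<And>t. t < k \<Longrightarrow> x + W t t \<noteq> 0"
  shows "poly (char_poly (mat N N (\<lambda>(i, j). if i = j then 0 else W (c i) (c j)))) x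
    = (\<Prod>t<k. (x + W t t) ^ (s t - 1)) * poly (char_poly (class_quotient_mat k W s)) x"
proof -
  define M where "M = mat N N (\<lambda>(i, j). if i = j then 0 else W (c i) (c j))"
  define Q where "Q = class_quotient_mat k W s"
  define U :: "'a mat" where "U = class_indicator_mat N k c"
  define V where "V = mat k N (\<lambda>(t, j). W t (c j))"
  define B where "B = mat N k (\<lambda>(i, t). if c i = t then 1 / (x + W t t) else 0)"
  define D where "D = mat_diag k (\<lambda>t. x + W t t)"
  have carrier: "M \<in> carrier_mat N N" "Q \<in> carrier_mat k k" "U \<in> carrier_mat N k"
    "V \<in> carrier_mat k N" "B \<in> carrier_mat N k"
    by (simp_all add: M_def Q_def class_quotient_mat_def U_def class_indicator_mat_def V_def B_def)
  then have IVB: "1\<^sub>m k - V * B \<in> carrier_mat k k"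
    by auto
  have "M = U * V - mat_diag N (\<lambda>i. W (c i) (c i))"
    unfolding M_def U_def V_def by (rule classwise_mat_eq[OF c])
  then have "- char_matrix M x = mat_diag N (\<lambda>i. x + W (c i) (c i)) - U * V"
    using carrier by (intro eq_matI) (auto simp: char_matrix_def mat_diag_def)
  moreover have "mat_diag N (\<lambda>i. x + W (c i) (c i)) * B = U"
    using c x by (subst mat_diag_mult_left[OF carrier(5)]) (auto simp: B_def U_def class_indicator_mat_def intro!: cong_mat)
  moreover have "V * B = mat k k (\<lambda>(t, u). W t u * (1 / (x + W u u)) * of_nat (s u))"
    unfolding V_def B_def s_def by (rule mult_classwise_cols)
  then have "(1\<^sub>m k - V * B) * D = - char_matrix Q x"
    unfolding D_def Q_def by (simp only:) (rule class_quotient_char_matrix, rule x)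
  moreover have "det (mat_diag N (\<lambda>i. x + W (c i) (c i))) = (\<Prod>t<k. (x + W t t) ^ (s t - 1)) * det D"
  proof -
    have "det (mat_diag N (\<lambda>i. x + W (c i) (c i))) = (\<Prod>t<k. (x + W t t) ^ s t)"
      unfolding s_def by (rule det_mat_diag_classwise[where f = "\<lambda>t. x + W t t", OF c])
    moreover have "(x + W t t) ^ s t = (x + W t t) ^ (s t - 1) * (x + W t t)" if "t < k" for t
      using s[OF that] by (cases "s t") auto
    ultimately show ?thesis
      by (simp add: D_def det_mat_diag flip: prod.distrib)
  qed
  ultimately have "det (- char_matrix M x) = (\<Prod>t<k. (x + W t t) ^ (s t - 1)) * det (- char_matrix Q x)"
    using carrier det_minus_mult_eq[of "mat_diag N (\<lambda>i. x + W (c i) (c i))" N U k V B]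
      det_mult[OF IVB, of D]
    by (simp add: D_def)
  then show ?thesis
    using char_poly_matrix[OF carrier(1)] char_poly_matrix[OF carrier(2)] by (simp add: M_def Q_def)
qed

lemma char_poly_classwise:
  fixes W :: "nat \<Rightarrow> nat \<Rightarrow> 'a::field_char_0" and c :: "nat \<Rightarrow> nat" and N :: nat
  defines "s \<equiv> \<lambda>t. card {i. i < N \<and> c i = t}"
  assumes c: "\<And>i. i < N \<Longrightarrow> c i < k" and s: "\<And>t. t < k \<Longrightarrow> s t \<noteq> 0"
  shows "char_poly (mat N N (\<lambda>(i, j). if i = j then 0 else W (c i) (c j)))
    = (\<Prod>t<k. [:W t t, 1:] ^ (s t - 1)) * char_poly (class_quotient_mat k W s)"
proof (rule poly_eqI_cofinite)
  show "finite ((\<lambda>t. - W t t) ` {..<k})" by simp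
  fix x assume x: "x \<notin> (\<lambda>t. - W t t) ` {..<k}"
  have "x + W t t \<noteq> 0" if "t < k" for t
  proof
    assume "x + W t t = 0"
    then have "x = - W t t"
      by (simp add: eq_neg_iff_add_eq_0)
    with x that show False
      by auto
  qed
  with c s have "poly (char_poly (mat N N (\<lambda>(i, j). if i = j then 0 else W (c i) (c j)))) x
    = (\<Prod>t<k. (x + W t t) ^ (s t - 1)) * poly (char_poly (class_quotient_mat k W s)) x"
    unfolding s_def by (rule poly_char_poly_classwise)
  then show "poly (char_poly (mat N N (\<lambda>(i, j). if i = j then 0 else W (c i) (c j)))) x
    = poly ((\<Prod>t<k. [:W t t, 1:] ^ (s t - 1)) * char_poly (class_quotient_mat k W s)) x"
    by (simp add: poly_prod add.commute)
qed

definition class_sombor_weight :: "(nat \<Rightarrow> nat \<Rightarrow> bool) \<Rightarrow> (nat \<Rightarrow> nat) \<Rightarrow> nat \<Rightarrow> nat \<Rightarrow> real" where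
  "class_sombor_weight E D t u = (if E t u then sqrt (real (D t) ^ 2 + real (D u) ^ 2) else 0)"

lemma class_sombor_weight_diag:
  assumes "E t t"
  shows "class_sombor_weight E D t t = real (D t) * sqrt 2"
proof -
  have "real (D t) ^ 2 + real (D t) ^ 2 = 2 * real (D t) ^ 2"
    by simp
  then show ?thesis
    using assms by (simp add: class_sombor_weight_def real_sqrt_mult)
qed

lemma card_nth_distinct:
  assumes "distinct xs"
  shows "card {i. i < length xs \<and> P (xs ! i)} = card {x \<in> set xs. P x}"
proof -
  have "card {i. i < length xs \<and> P (xs ! i)} = card ({x. P x} \<inter> set xs)"
    using assms by (simp flip: distinct_length_filter add: length_filter_conv_card)
  also have "{x. P x} \<inter> set xs = {x \<in> set xs. P x}"
    by auto
  finally show ?thesis .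
qed

lemma sombor_matrix_classwise:
  assumes vs: "distinct vs"
    and adj: "\<And>u v. u \<in> set vs \<Longrightarrow> v \<in> set vs \<Longrightarrow> adj u v \<longleftrightarrow> u \<noteq> v \<and> E (c u) (c v)"
    and deg: "\<And>v. v \<in> set vs \<Longrightarrow> graph_deg vs adj v = D (c v)"
  shows "sombor_matrix vs adj = mat (length vs) (length vs)
    (\<lambda>(i, j). if i = j then 0 else class_sombor_weight E D (c (vs ! i)) (c (vs ! j)))"
proof (rule eq_matI)
  fix i j assume "i < dim_row (mat (length vs) (length vs)
      (\<lambda>(i, j). if i = j then 0 else class_sombor_weight E D (c (vs ! i)) (c (vs ! j))))"
    "j < dim_col (mat (length vs) (length vs)
      (\<lambda>(i, j). if i = j then 0 else class_sombor_weight E D (c (vs ! i)) (c (vs ! j))))"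
  then have ij: "i < length vs" "j < length vs"
    by simp_all
  then have "adj (vs ! i) (vs ! j) \<longleftrightarrow> i \<noteq> j \<and> E (c (vs ! i)) (c (vs ! j))"
    using adj[of "vs ! i" "vs ! j"] nth_eq_iff_index_eq[OF vs] by simp
  with ij show "sombor_matrix vs adj $$ (i, j) = mat (length vs) (length vs)
      (\<lambda>(i, j). if i = j then 0 else class_sombor_weight E D (c (vs ! i)) (c (vs ! j))) $$ (i, j)"
    by (simp add: sombor_matrix_def class_sombor_weight_def deg)
qed (simp_all add: sombor_matrix_def)

lemma sombor_spectrum_classwise:
  fixes vs :: "'v list" and c :: "'v \<Rightarrow> nat" and E :: "nat \<Rightarrow> nat \<Rightarrow> bool" and D :: "nat \<Rightarrow> nat"
  defines "W \<equiv> class_sombor_weight E D" and "s \<equiv> \<lambda>t. card {v \<in> set vs. c v = t}"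
  assumes vs: "distinct vs"
    and adj: "\<And>u v. u \<in> set vs \<Longrightarrow> v \<in> set vs \<Longrightarrow> adj u v \<longleftrightarrow> u \<noteq> v \<and> E (c u) (c v)"
    and deg: "\<And>v. v \<in> set vs \<Longrightarrow> graph_deg vs adj v = D (c v)"
    and k: "c ` set vs = {..<k}"
  shows "sombor_spectrum vs adj = (\<Sum>t<k. replicate_mset (s t - 1) (- complex_of_real (W t t)))
    + proots (map_poly complex_of_real (char_poly (class_quotient_mat k W s)))"
proof -
  let ?N = "length vs"
  let ?Q = "class_quotient_mat k W s"
  have s_nth: "card {i. i < ?N \<and> c (vs ! i) = t} = s t" for t
    unfolding s_def by (rule card_nth_distinct[OF vs])
  have sombor: "sombor_matrix vs adj = mat ?N ?N (\<lambda>(i, j). if i = j then 0 else W (c (vs ! i)) (c (vs ! j)))"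
    unfolding W_def by (rule sombor_matrix_classwise[OF vs adj deg])
  have c_lt: "c (vs ! i) < k" if "i < ?N" for i
    using k that nth_mem by blast
  have s_ne: "card {i. i < ?N \<and> c (vs ! i) = t} \<noteq> 0" if "t < k" for t
  proof -
    have "t \<in> c ` set vs"
      using k that by simp
    then obtain v where "v \<in> set vs" "c v = t"
      by blast
    then show ?thesis
      by (auto simp: s_nth s_def card_eq_0_iff)
  qed
  have char: "char_poly (sombor_matrix vs adj) = (\<Prod>t<k. [:W t t, 1:] ^ (s t - 1)) * char_poly ?Q"
    using char_poly_classwise[where c = "\<lambda>i. c (vs ! i)" and W = W, OF c_lt s_ne]
    by (simp only: sombor s_nth)
  interpret of_real_poly: map_poly_inj_idom_hom complex_of_real ..
  have "map_poly complex_of_real (char_poly (sombor_matrix vs adj))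
      = (\<Prod>t<k. [:complex_of_real (W t t), 1:] ^ (s t - 1)) * map_poly complex_of_real (char_poly ?Q)"
    by (simp add: char of_real_poly.hom_mult of_real_poly.hom_prod of_real_poly.hom_power)
  moreover have "char_poly ?Q \<noteq> 0"
    using degree_monic_char_poly[of ?Q k] by (auto simp: class_quotient_mat_def)
  moreover have "(\<Prod>t<k. [:complex_of_real (W t t), 1:] ^ (s t - 1)) \<noteq> 0"
    by (simp add: prod_zero_iff)
  moreover have "proots (\<Prod>t<k. [:complex_of_real (W t t), 1:] ^ (s t - 1))
      = (\<Sum>t<k. replicate_mset (s t - 1) (- complex_of_real (W t t)))"
    by (simp add: proots_prod proots_power repeat_mset_replicate_mset)
  ultimately show ?thesis
    unfolding sombor_spectrum_def by (simp add: proots_mult)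
qed

(* The rotation a^i is central in SD_8n iff sd_center_step n divides i (cf. sd_commute_iff). *)
definition sd_center_step :: "nat \<Rightarrow> nat" where
  "sd_center_step n = (if odd n then n else 2 * n)"

lemma four_n_dvd_iff_center_step_dvd:
  fixes d :: int
  assumes "n \<ge> 1"
  shows "4 * int n dvd d * (2 * int n - 2) \<longleftrightarrow> int (sd_center_step n) dvd d"
proof -
  have "4 * int n dvd d * (2 * int n - 2) \<longleftrightarrow> 2 * (2 * int n) dvd 2 * (d * (int n - 1))"
    by (simp add: algebra_simps)
  also have "\<dots> \<longleftrightarrow> 2 * int n dvd d * (int n - 1)"
    by (rule dvd_times_left_cancel_iff) simp
  also have "\<dots> \<longleftrightarrow> int (sd_center_step n) dvd d"
  proof (cases "odd n")
    case True
    then obtain k where "n = 2 * k + 1"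
      by (rule oddE)
    then have r: "int n - 1 = 2 * int k"
      by simp
    have "coprime (int n) (int k)"
      using coprime_doff_one_right[of "int n"] unfolding r by simp
    then show ?thesis
      using True by (simp add: sd_center_step_def r mult.left_commute coprime_dvd_mult_left_iff)
  next
    case False
    have "coprime (2 * int n) (int n - 1)"
      using False assms coprime_doff_one_right[of "int n"] by (simp add: even_diff)
    then show ?thesis
      using False by (simp add: sd_center_step_def coprime_dvd_mult_left_iff)
  qed
  finally show ?thesis .
qed

lemma coprime_center_step:
  assumes "n \<ge> 1" "l < 2"
  shows "coprime (int (sd_center_step n)) (1 + int l * (2 * int n - 2))"
proof -
  have "coprime (2 * int n) (2 * int n - 1)"
    by (rule coprime_doff_one_right)
  moreover from this have "coprime (int n) (2 * int n - 1)"
    using coprime_mult_left_iff by blast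
  ultimately have "coprime (int (sd_center_step n)) (2 * int n - 1)"
    by (simp add: sd_center_step_def)
  then show ?thesis
    using assms by (cases l) auto
qed

lemma center_step_dvd_four_n: "int (sd_center_step n) dvd 4 * int n"
  by (auto simp: sd_center_step_def)

lemma sd_carrier_iff: "g \<in> sd_carrier n \<longleftrightarrow> fst g < 4 * n \<and> snd g < 2"
  by (cases g) (auto simp: sd_carrier_def)

lemma sd_mult_fst:
  assumes "n \<ge> 1" "snd g < 2"
  shows "int (fst (sd_mult n g h))
    = (int (fst g) + int (fst h) * (1 + int (snd g) * (2 * int n - 2))) mod (4 * int n)"
proof -
  have "int ((2 * n - 1) ^ snd g) = 1 + int (snd g) * (2 * int n - 2)"
    using assms by (cases "snd g") (auto simp: of_nat_diff)
  then show ?thesis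
    by (simp add: sd_mult_def zmod_int)
qed

lemma sd_mult_snd: "snd (sd_mult n g h) = (snd g + snd h) mod 2"
  by (simp add: sd_mult_def)

lemma sd_commute_iff:
  assumes n: "n \<ge> 1" and g: "g \<in> sd_carrier n" and h: "h \<in> sd_carrier n"
  shows "sd_mult n g h = sd_mult n h g
    \<longleftrightarrow> int (sd_center_step n) dvd int (snd g) * int (fst h) - int (snd h) * int (fst g)"
proof -
  have "sd_mult n g h = sd_mult n h g \<longleftrightarrow> int (fst (sd_mult n g h)) = int (fst (sd_mult n h g))"
    by (simp add: prod_eq_iff sd_mult_snd add.commute)
  also have "\<dots> \<longleftrightarrow> 4 * int n dvd (int (snd g) * int (fst h) - int (snd h) * int (fst g)) * (2 * int n - 2)"
    using g h by (simp add: sd_mult_fst[OF n] sd_carrier_iff mod_eq_dvd_iff algebra_simps)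
  finally show ?thesis
    using four_n_dvd_iff_center_step_dvd[OF n] by simp
qed

lemma sd_conj_iff:
  assumes n: "n \<ge> 1" and g: "g \<in> sd_carrier n" and h: "h \<in> sd_carrier n"
  shows "sd_conj n g h \<longleftrightarrow> snd h = snd g \<and> (\<exists>x\<in>sd_carrier n. 4 * int n dvd
    int (fst h) - int (fst g) - (int (snd x) * int (fst g) - int (snd h) * int (fst x)) * (2 * int n - 2))"
proof -
  have "sd_mult n h x = sd_mult n x g \<longleftrightarrow> snd h = snd g \<and> 4 * int n dvd
    int (fst h) - int (fst g) - (int (snd x) * int (fst g) - int (snd h) * int (fst x)) * (2 * int n - 2)"
    if x: "x \<in> sd_carrier n" for x
  proof -
    have snd: "(snd h + snd x) mod 2 = (snd x + snd g) mod 2 \<longleftrightarrow> snd h = snd g"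
      using g h x unfolding sd_carrier_iff by presburger
    have "fst (sd_mult n h x) = fst (sd_mult n x g) \<longleftrightarrow>
        int (fst (sd_mult n h x)) = int (fst (sd_mult n x g))"
      by simp
    also have "\<dots> \<longleftrightarrow> 4 * int n dvd
      int (fst h) - int (fst g) - (int (snd x) * int (fst g) - int (snd h) * int (fst x)) * (2 * int n - 2)"
      using h x by (simp add: sd_mult_fst[OF n] sd_carrier_iff mod_eq_dvd_iff algebra_simps)
    finally show ?thesis
      using snd by (auto simp: prod_eq_iff sd_mult_snd)
  qed
  then show ?thesis
    unfolding sd_conj_def by blast
qed

lemma sd_conj_refl: "g \<in> sd_carrier n \<Longrightarrow> sd_conj n g g"
  unfolding sd_conj_def by (rule bexI[of _ "(0, 0)"]) (auto simp: sd_mult_def sd_carrier_iff)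

(* Conjugation by the rotation a^m maps a^i b to a^(i + m (2 - 2n)) b. *)
lemma sd_conj_reflectionI:
  assumes n: "n \<ge> 1" and ij: "i < 4 * n" "j < 4 * n"
    and m: "4 * int n dvd int j - int i + m * (2 * int n - 2)"
  shows "sd_conj n (i, 1) (j, 1)"
proof -
  define r where "r = m mod (4 * int n)"
  have r: "0 \<le> r" "r < 4 * int n"
    using n by (simp_all add: r_def)
  have "4 * int n dvd (m - r) * (2 * int n - 2)"
    by (simp add: r_def mod_eq_dvd_iff[symmetric])
  with m have "4 * int n dvd (int j - int i + m * (2 * int n - 2)) - (m - r) * (2 * int n - 2)"
    by (rule dvd_diff)
  then have "4 * int n dvd int j - int i - (0 * int i - 1 * int (nat r)) * (2 * int n - 2)"
    using r by (simp add: algebra_simps)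
  moreover have "(i, 1) \<in> sd_carrier n" "(j, 1) \<in> sd_carrier n" "(nat r, 0) \<in> sd_carrier n"
    using ij r by (simp_all add: sd_carrier_iff nat_less_iff)
  ultimately show ?thesis
    by (subst sd_conj_iff[OF n]) (auto intro!: bexI[of _ "(nat r, 0)"])
qed

lemma sd_conj_reflection_four_dvd:
  assumes n: "n \<ge> 1" and ij: "i < 4 * n" "j < 4 * n" and "4 dvd int j - int i"
  shows "sd_conj n (i, 1) (j, 1)"
proof -
  obtain e where e: "int j - int i = 4 * e"
    using assms(4) by blast
  have "int j - int i + 2 * e * (2 * int n - 2) = 4 * int n * e"
    unfolding e by (simp add: algebra_simps)
  then show ?thesis
    by (intro sd_conj_reflectionI[OF n ij, of "2 * e"]) simp
qed

lemma sd_conj_reflection_even: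
  assumes n: "n \<ge> 1" "even n" and ij: "i < 4 * n" "j < 4 * n" and "even (int j - int i)"
  shows "sd_conj n (i, 1) (j, 1)"
proof -
  obtain d where d: "int j - int i = 2 * d"
    using assms(5) by blast
  obtain k where k: "n = 2 * k"
    using n(2) by blast
  have "int j - int i + (int n + 1) * d * (2 * int n - 2) = 4 * int n * (d * int k)"
    unfolding d k by (simp add: algebra_simps)
  then show ?thesis
    by (intro sd_conj_reflectionI[OF n(1) ij, of "(int n + 1) * d"]) simp
qed

(* For odd n, a^i b commutes with a^i' b iff n divides i - i', while a^j b and a^i' b are
   conjugate when 4 divides j - i'; the Chinese remainder theorem provides i'. *)
lemma sd_odd_reflection_partner:
  assumes n: "odd n" and i: "i < 4 * n" and nd: "\<not> 4 dvd int j - int i"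
  shows "\<exists>i' < 4 * n. i' \<noteq> i \<and> int n dvd int i - int i' \<and> 4 dvd int j - int i'"
proof -
  obtain m where m: "n = 2 * m + 1"
    using n by (rule oddE)
  define t where "t = ((int j - int i) * int n) mod 4"
  define q where "q = (int i + int n * t) div (4 * int n)"
  define i' where "i' = nat ((int i + int n * t) mod (4 * int n))"
  have t: "0 \<le> t" "t < 4" "t = (int j - int i) * int n - 4 * (((int j - int i) * int n) div 4)"
    unfolding t_def by (simp_all add: minus_div_mult_eq_mod[symmetric] algebra_simps)
  have pos: "0 < 4 * int n"
    using m by simp
  have "int i' = (int i + int n * t) mod (4 * int n)" "i' < 4 * n"
    using pos by (simp_all add: i'_def nat_less_iff)
  moreover have "(int i + int n * t) mod (4 * int n) = int i + int n * t - 4 * int n * q"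
    unfolding q_def by (rule minus_mult_div_eq_mod[symmetric])
  ultimately have i': "int i' = int i + int n * t - 4 * int n * q" "i' < 4 * n"
    by simp_all
  have "int i - int i' = int n * (4 * q - t)"
    using i' by (simp add: algebra_simps)
  moreover have "int j - int i' = 4 * ((int j - int i) * (- int m * int m - int m)
      + int n * (((int j - int i) * int n) div 4) + int n * q)"
    using i'(1) t(3) unfolding m by (simp add: algebra_simps)
  moreover have "i' \<noteq> i"
  proof
    assume "i' = i"
    then have "t = 4 * q"
      using i'(1) pos by simp
    then have "4 dvd (int j - int i) * int n"
      using t by (simp add: t_def dvd_eq_mod_eq_0)
    moreover have "coprime 4 (int n)"
      using n by (simp add: coprime_commute[of 4] coprime_mult_right_iff[of _ 2 2, simplified])
    ultimately show False
      using nd by (simp add: coprime_dvd_mult_left_iff)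
  qed
  ultimately show ?thesis
    using i'(2) by (metis dvd_triv_left)
qed

(* Blocks of vertices: 0 is the centre, 1 the non-central rotations, and 2 the reflections
   a^i b, which for even n split by the parity of i into 2 and 3. *)
definition sd_block :: "nat \<Rightarrow> nat \<times> nat \<Rightarrow> nat" where
  "sd_block n g = (if snd g = 0 then if sd_center_step n dvd fst g then 0 else 1
     else if odd n then 2 else 2 + fst g mod 2)"

definition sd_block_adj :: "nat \<Rightarrow> nat \<Rightarrow> bool" where
  "sd_block_adj t u \<longleftrightarrow> t = 0 \<or> u = 0 \<or> t = u"

lemma sd_block_conj:
  assumes n: "n \<ge> 1" and g: "g \<in> sd_carrier n" and h: "h \<in> sd_carrier n" and "sd_conj n g h"
  shows "sd_block n h = sd_block n g"
proof -
  obtain x where x: "x \<in> sd_carrier n" and snd: "snd h = snd g"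
    and d: "4 * int n dvd int (fst h) - int (fst g)
      - (int (snd x) * int (fst g) - int (snd h) * int (fst x)) * (2 * int n - 2)"
    using assms sd_conj_iff by blast
  consider "snd g = 0" | "snd g = 1"
    using g by (auto simp: sd_carrier_iff less_2_cases_iff)
  then show ?thesis
  proof cases
    case 1
    let ?z = "int (sd_center_step n)" and ?u = "1 + int (snd x) * (2 * int n - 2)"
    have "?z dvd int (fst h) - int (fst g) * ?u"
      using 1 snd dvd_trans[OF center_step_dvd_four_n d] by (simp add: algebra_simps)
    then have "?z dvd int (fst h) \<longleftrightarrow> ?z dvd int (fst g) * ?u"
      by (metis dvd_add_right_iff diff_add_cancel)
    also have "\<dots> \<longleftrightarrow> ?z dvd int (fst g)"
      using coprime_center_step[OF n] x by (simp add: sd_carrier_iff coprime_dvd_mult_left_iff)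
    finally show ?thesis
      using 1 snd by (simp add: sd_block_def)
  next
    case 2
    have "even (int (fst h) - int (fst g)
      - (int (snd x) * int (fst g) - int (snd h) * int (fst x)) * (2 * int n - 2))"
      using dvd_trans[OF _ d, of 2] by simp
    then have "fst h mod 2 = fst g mod 2"
      by simp presburger
    then show ?thesis
      using 2 snd by (simp add: sd_block_def)
  qed
qed

lemma sd_block_commute:
  assumes n: "n \<ge> 1" and g: "g \<in> sd_carrier n" and h: "h \<in> sd_carrier n"
    and "sd_mult n g h = sd_mult n h g"
  shows "sd_block_adj (sd_block n g) (sd_block n h)"
proof -
  let ?z = "int (sd_center_step n)"
  have d: "?z dvd int (snd g) * int (fst h) - int (snd h) * int (fst g)"
    using assms sd_commute_iff by blast
  consider "snd g = 0" "snd h = 0" | "snd g = 0" "snd h = 1" | "snd g = 1" "snd h = 0" | "snd g = 1" "snd h = 1"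
    using g h by (auto simp: sd_carrier_iff less_2_cases_iff)
  then show ?thesis
  proof cases
    case 2
    then have "sd_center_step n dvd fst g"
      using d by simp
    then show ?thesis
      using 2 by (simp add: sd_block_adj_def sd_block_def)
  next
    case 3
    then have "sd_center_step n dvd fst h"
      using d by simp
    then show ?thesis
      using 3 by (simp add: sd_block_adj_def sd_block_def)
  next
    case 4
    show ?thesis
    proof (cases "odd n")
      case False
      then have "2 * int n dvd int (fst h) - int (fst g)"
        using 4 d by (simp add: sd_center_step_def)
      then have "even (int (fst h) - int (fst g))"
        by (rule dvd_trans[rotated]) simp
      then have "fst g mod 2 = fst h mod 2"
        by simp presburger
      then show ?thesis
        using 4 by (simp add: sd_block_adj_def sd_block_def)
    qed (use 4 in \<open>simp add: sd_block_adj_def sd_block_def\<close>)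
  qed (auto simp: sd_block_adj_def sd_block_def)
qed

lemma sd_block_adj_if_csc_adj:
  assumes n: "n \<ge> 1" and adj: "sd_csc_adj n g h"
  shows "sd_block_adj (sd_block n g) (sd_block n h)"
proof -
  have g: "g \<in> sd_carrier n" and h: "h \<in> sd_carrier n"
    using adj by (simp_all add: sd_csc_adj_def)
  from adj consider "sd_conj n g h"
    | g' h' where "g' \<in> sd_carrier n" "h' \<in> sd_carrier n" "sd_conj n g g'" "sd_conj n h h'"
        "sd_mult n g' h' = sd_mult n h' g'"
    unfolding sd_csc_adj_def by blast
  then show ?thesis
  proof cases
    case 1
    then show ?thesis
      using sd_block_conj[OF n g h] by (simp add: sd_block_adj_def)
  next
    case 2
    then have "sd_block n g' = sd_block n g" "sd_block n h' = sd_block n h"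
      using sd_block_conj[OF n] g h by blast+
    then show ?thesis
      using sd_block_commute[OF n 2(1,2,5)] by simp
  qed
qed

lemma sd_csc_adj_reflections:
  assumes n: "n \<ge> 1" and ij: "i < 4 * n" "j < 4 * n" "i \<noteq> j"
    and block: "sd_block n (i, 1) = sd_block n (j, 1)"
  shows "sd_csc_adj n (i, 1) (j, 1)"
proof -
  have g: "(i, 1) \<in> sd_carrier n" and h: "(j, 1) \<in> sd_carrier n"
    using ij by (simp_all add: sd_carrier_iff)
  have by_conj: "sd_csc_adj n (i, 1) (j, 1)" if "sd_conj n (i, 1) (j, 1)"
    using g h ij(3) that by (simp add: sd_csc_adj_def)
  show ?thesis
  proof (cases "odd n")
    case False
    then have "even n" "even (int j - int i)"
      using block by (simp_all add: sd_block_def) presburger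
    then show ?thesis
      by (intro by_conj sd_conj_reflection_even[OF n _ ij(1,2)])
  next
    case True
    show ?thesis
    proof (cases "4 dvd int j - int i")
      case True
      then show ?thesis
        by (intro by_conj sd_conj_reflection_four_dvd[OF n ij(1,2)])
    next
      case False
      then obtain i' where i': "i' < 4 * n" "i' \<noteq> i" "int n dvd int i - int i'" "4 dvd int j - int i'"
        using sd_odd_reflection_partner[OF \<open>odd n\<close> ij(1)] by blast
      have partner: "(i', 1) \<in> sd_carrier n"
        using i'(1) by (simp add: sd_carrier_iff)
      have "sd_conj n (j, 1) (i', 1)"
        by (rule sd_conj_reflection_four_dvd[OF n ij(2) i'(1)]) (subst dvd_diff_commute, rule i'(4))
      moreover have "int n dvd int i' - int i"
        by (subst dvd_diff_commute) (rule i'(3))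
      then have "sd_mult n (i, 1) (i', 1) = sd_mult n (i', 1) (i, 1)"
        using g partner \<open>odd n\<close> by (simp add: sd_commute_iff[OF n] sd_center_step_def)
      moreover have "(i, 1) \<noteq> (i', 1)" "(i, 1) \<noteq> (j, 1)"
        using i'(2) ij(3) by simp_all
      ultimately show ?thesis
        using g h partner sd_conj_refl[OF g] unfolding sd_csc_adj_def by blast
    qed
  qed
qed

lemma sd_csc_adj_if_block_adj:
  assumes n: "n \<ge> 1" and g: "g \<in> sd_carrier n" and h: "h \<in> sd_carrier n" and "g \<noteq> h"
    and blocks: "sd_block_adj (sd_block n g) (sd_block n h)"
  shows "sd_csc_adj n g h"
proof -
  have by_commute: "sd_csc_adj n g h" if "sd_mult n g h = sd_mult n h g"
    using g h \<open>g \<noteq> h\<close> that sd_conj_refl unfolding sd_csc_adj_def by blast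
  obtain i a j b where gh: "g = (i, a)" "h = (j, b)" and ij: "i < 4 * n" "j < 4 * n"
    using g h by (cases g, cases h) (auto simp: sd_carrier_iff)
  consider (central) "sd_block n g = 0 \<or> sd_block n h = 0" | (rotations) "a = 0" "b = 0"
    | (reflections) "a = 1" "b = 1" "sd_block n g = sd_block n h"
    using g h blocks gh
    by (auto simp: sd_block_def sd_block_adj_def sd_carrier_iff less_2_cases_iff split: if_splits)
  then show ?thesis
  proof cases
    case central
    then show ?thesis
      using g h gh by (intro by_commute) (auto simp: sd_commute_iff[OF n] sd_block_def split: if_splits)
  next
    case rotations
    then show ?thesis
      using g h gh by (intro by_commute) (simp add: sd_commute_iff[OF n])
  next
    case reflections
    then show ?thesis
      using sd_csc_adj_reflections[OF n ij] \<open>g \<noteq> h\<close> gh by simp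
  qed
qed

lemma sd_csc_adj_iff:
  assumes "n \<ge> 1"
  shows "sd_csc_adj n g h \<longleftrightarrow> g \<in> sd_carrier n \<and> h \<in> sd_carrier n \<and> g \<noteq> h
    \<and> sd_block_adj (sd_block n g) (sd_block n h)"
proof
  assume adj: "sd_csc_adj n g h"
  then have "sd_block_adj (sd_block n g) (sd_block n h)"
    by (rule sd_block_adj_if_csc_adj[OF assms])
  with adj show "g \<in> sd_carrier n \<and> h \<in> sd_carrier n \<and> g \<noteq> h
    \<and> sd_block_adj (sd_block n g) (sd_block n h)"
    by (simp add: sd_csc_adj_def)
next
  assume "g \<in> sd_carrier n \<and> h \<in> sd_carrier n \<and> g \<noteq> h \<and> sd_block_adj (sd_block n g) (sd_block n h)"
  then show "sd_csc_adj n g h"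
    by (elim conjE) (rule sd_csc_adj_if_block_adj[OF assms])
qed

lemma card_multiples_less:
  assumes "0 < d" "d dvd N"
  shows "card {a. a < N \<and> d dvd a} = N div d"
proof -
  obtain r where N: "N = d * r"
    using assms(2) by blast
  have "{a. a < N \<and> d dvd a} = (\<lambda>q. d * q) ` {..<r}"
    using assms(1) unfolding N by (auto elim!: dvdE)
  then show ?thesis
    using assms(1) by (simp add: N card_image inj_on_def)
qed

definition sd_block_size :: "nat \<Rightarrow> nat \<Rightarrow> nat" where
  "sd_block_size n t = card {g \<in> sd_carrier n. sd_block n g = t}"

lemma sd_block_size_rotations:
  assumes n: "n \<ge> 1"
  shows "sd_block_size n 0 = 4 * n div sd_center_step n"
    and "sd_block_size n 1 = 4 * n - 4 * n div sd_center_step n"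
proof -
  have z: "0 < sd_center_step n" "sd_center_step n dvd 4 * n"
    using n by (auto simp: sd_center_step_def)
  have inj: "inj_on (\<lambda>a. (a, 0::nat)) A" for A
    by (auto simp: inj_on_def)
  have "{g \<in> sd_carrier n. sd_block n g = 0} = (\<lambda>a. (a, 0)) ` {a. a < 4 * n \<and> sd_center_step n dvd a}"
    by (auto simp: sd_block_def sd_carrier_iff image_iff split: if_splits)
  then show "sd_block_size n 0 = 4 * n div sd_center_step n"
    using z by (simp add: sd_block_size_def card_image[OF inj] card_multiples_less)
  have "{g \<in> sd_carrier n. sd_block n g = 1}
      = (\<lambda>a. (a, 0)) ` ({..<4 * n} - {a. a < 4 * n \<and> sd_center_step n dvd a})"
    by (auto simp: sd_block_def sd_carrier_iff image_iff split: if_splits)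
  moreover have "card ({..<4 * n} - {a. a < 4 * n \<and> sd_center_step n dvd a}) = 4 * n - 4 * n div sd_center_step n"
    using z by (subst card_Diff_subset) (auto simp: card_multiples_less)
  ultimately show "sd_block_size n 1 = 4 * n - 4 * n div sd_center_step n"
    by (simp add: sd_block_size_def card_image[OF inj])
qed

lemma sd_block_size_reflections:
  shows "odd n \<Longrightarrow> sd_block_size n 2 = 4 * n"
    and "even n \<Longrightarrow> sd_block_size n 2 = 2 * n"
    and "even n \<Longrightarrow> sd_block_size n 3 = 2 * n"
proof -
  show "odd n \<Longrightarrow> sd_block_size n 2 = 4 * n"
  proof -
    assume "odd n"
    then have "{g \<in> sd_carrier n. sd_block n g = 2} = (\<lambda>a. (a, 1)) ` {..<4 * n}"
      by (auto simp: sd_block_def sd_carrier_iff image_iff less_2_cases_iff)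
    then show ?thesis
      by (simp add: sd_block_size_def card_image inj_on_def)
  qed
  assume "even n"
  have "{g \<in> sd_carrier n. sd_block n g = 2 + b} = (\<lambda>m. (2 * m + b, 1)) ` {..<2 * n}"
    if "b < 2" for b
  proof (intro equalityI subsetI)
    fix g assume "g \<in> {g \<in> sd_carrier n. sd_block n g = 2 + b}"
    then have "snd g = 1" "fst g < 4 * n" "fst g mod 2 = b"
      using \<open>even n\<close> by (auto simp: sd_block_def sd_carrier_iff less_2_cases_iff split: if_splits)
    then show "g \<in> (\<lambda>m. (2 * m + b, 1)) ` {..<2 * n}"
      by (intro image_eqI[of _ _ "fst g div 2"]) (auto simp: prod_eq_iff)
  qed (use \<open>even n\<close> that in \<open>auto simp: sd_block_def sd_carrier_iff\<close>)
  from this[of 0] this[of 1] show "sd_block_size n 2 = 2 * n" "sd_block_size n 3 = 2 * n"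
    by (simp_all add: sd_block_size_def card_image inj_on_def)
qed

definition sd_block_count :: "nat \<Rightarrow> nat" where
  "sd_block_count n = (if odd n then 3 else 4)"

lemma sd_block_image:
  assumes "n \<ge> 2"
  shows "sd_block n ` sd_carrier n = {..<sd_block_count n}"
proof
  show "sd_block n ` sd_carrier n \<subseteq> {..<sd_block_count n}"
    by (auto simp: sd_block_def sd_block_count_def)
  have "\<not> sd_center_step n dvd 1"
    using assms by (simp add: sd_center_step_def)
  then have "sd_block n (0, 0) = 0" "sd_block n (1, 0) = 1" "sd_block n (0, 1) = 2"
    "even n \<Longrightarrow> sd_block n (1, 1) = 3"
    by (simp_all add: sd_block_def)
  moreover have "(0, 0) \<in> sd_carrier n" "(1, 0) \<in> sd_carrier n" "(0, 1) \<in> sd_carrier n" "(1, 1) \<in> sd_carrier n"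
    using assms by (simp_all add: sd_carrier_iff)
  moreover have "t = 0 \<or> t = 1 \<or> t = 2 \<or> even n \<and> t = 3" if "t < sd_block_count n" for t
    using that by (auto simp: sd_block_count_def split: if_splits)
  ultimately show "{..<sd_block_count n} \<subseteq> sd_block n ` sd_carrier n"
    by (fastforce intro: rev_image_eqI)
qed

lemma set_csc_SD_vertices: "set (csc_SD_vertices n) = sd_carrier n"
  by (simp add: csc_SD_vertices_def sd_carrier_def)

definition sd_block_deg :: "nat \<Rightarrow> nat \<Rightarrow> nat" where
  "sd_block_deg n t = (if t = 0 then 8 * n - 1 else sd_block_size n 0 + sd_block_size n t - 1)"

lemma graph_deg_csc_SD:
  assumes n: "n \<ge> 1" and g: "g \<in> sd_carrier n"
  shows "graph_deg (csc_SD_vertices n) (sd_csc_adj n) g = sd_block_deg n (sd_block n g)"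
proof -
  let ?C = "\<lambda>t. {h \<in> sd_carrier n. sd_block n h = t}"
  have "graph_deg (csc_SD_vertices n) (sd_csc_adj n) g
      = card {h \<in> sd_carrier n. h \<noteq> g \<and> sd_block_adj (sd_block n g) (sd_block n h)}"
    using g by (auto simp: graph_deg_def set_csc_SD_vertices sd_csc_adj_iff[OF n] intro!: arg_cong[where f = card])
  also have "\<dots> = sd_block_deg n (sd_block n g)"
  proof (cases "sd_block n g = 0")
    case True
    then have "{h \<in> sd_carrier n. h \<noteq> g \<and> sd_block_adj (sd_block n g) (sd_block n h)} = sd_carrier n - {g}"
      by (auto simp: sd_block_adj_def)
    then show ?thesis
      using True g by (simp add: sd_block_deg_def sd_carrier_def)
  next
    case False
    then have "{h \<in> sd_carrier n. h \<noteq> g \<and> sd_block_adj (sd_block n g) (sd_block n h)}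
        = (?C 0 \<union> ?C (sd_block n g)) - {g}"
      by (auto simp: sd_block_adj_def)
    moreover have "card (?C 0 \<union> ?C (sd_block n g)) = card (?C 0) + card (?C (sd_block n g))"
      using False by (intro card_Un_disjoint) (auto simp: sd_carrier_def)
    ultimately show ?thesis
      using False g by (simp add: sd_block_deg_def sd_block_size_def)
  qed
  finally show ?thesis .
qed

definition sd_quotient_mat :: "nat \<Rightarrow> real mat" where
  "sd_quotient_mat n = class_quotient_mat (sd_block_count n)
     (class_sombor_weight sd_block_adj (sd_block_deg n)) (sd_block_size n)"

lemma sombor_spectrum_csc_SD:
  assumes n: "n \<ge> 2"
  shows "sombor_spectrum (csc_SD_vertices n) (sd_csc_adj n)
    = (\<Sum>t<sd_block_count n. replicate_mset (sd_block_size n t - 1)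
        (- complex_of_real (real (sd_block_deg n t) * sqrt 2)))
      + proots (map_poly complex_of_real (char_poly (sd_quotient_mat n)))"
proof -
  have "class_sombor_weight sd_block_adj (sd_block_deg n) t t = real (sd_block_deg n t) * sqrt 2" for t
    by (rule class_sombor_weight_diag) (simp add: sd_block_adj_def)
  moreover have "card {v \<in> set (csc_SD_vertices n). sd_block n v = t} = sd_block_size n t" for t
    by (simp add: set_csc_SD_vertices sd_block_size_def)
  moreover have "sombor_spectrum (csc_SD_vertices n) (sd_csc_adj n)
    = (\<Sum>t<sd_block_count n. replicate_mset (card {v \<in> set (csc_SD_vertices n). sd_block n v = t} - 1)
        (- complex_of_real (class_sombor_weight sd_block_adj (sd_block_deg n) t t)))
      + proots (map_poly complex_of_real (char_poly (class_quotient_mat (sd_block_count n)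
          (class_sombor_weight sd_block_adj (sd_block_deg n))
          (\<lambda>t. card {v \<in> set (csc_SD_vertices n). sd_block n v = t}))))"
  proof (rule sombor_spectrum_classwise)
    show "distinct (csc_SD_vertices n)"
      by (simp add: csc_SD_vertices_def)
    show "sd_csc_adj n u v \<longleftrightarrow> u \<noteq> v \<and> sd_block_adj (sd_block n u) (sd_block n v)"
      if "u \<in> set (csc_SD_vertices n)" "v \<in> set (csc_SD_vertices n)" for u v
      using that n by (simp add: sd_csc_adj_iff set_csc_SD_vertices)
    show "graph_deg (csc_SD_vertices n) (sd_csc_adj n) v = sd_block_deg n (sd_block n v)"
      if "v \<in> set (csc_SD_vertices n)" for v
      using that n by (simp add: graph_deg_csc_SD set_csc_SD_vertices)
    show "sd_block n ` set (csc_SD_vertices n) = {..<sd_block_count n}"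
      using n by (simp add: sd_block_image set_csc_SD_vertices)
  qed
  ultimately show ?thesis
    by (simp add: sd_quotient_mat_def)
qed

lemma sd_block_values_odd:
  assumes "n \<ge> 2" "odd n"
  shows "sd_block_count n = 3"
    and "sd_block_size n 0 = 4" "sd_block_size n 1 = 4 * n - 4" "sd_block_size n 2 = 4 * n"
    and "sd_block_deg n 0 = 8 * n - 1" "sd_block_deg n 1 = 4 * n - 1" "sd_block_deg n 2 = 4 * n + 3"
  using assms sd_block_size_rotations[of n] sd_block_size_reflections[of n]
  by (simp_all add: sd_block_count_def sd_block_deg_def sd_center_step_def)

lemma sd_block_values_even:
  assumes "n \<ge> 2" "even n"
  shows "sd_block_count n = 4"
    and "sd_block_size n 0 = 2" "sd_block_size n 1 = 4 * n - 2" "sd_block_size n 2 = 2 * n"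
      "sd_block_size n 3 = 2 * n"
    and "sd_block_deg n 0 = 8 * n - 1" "sd_block_deg n 1 = 4 * n - 1" "sd_block_deg n 2 = 2 * n + 1"
      "sd_block_deg n 3 = 2 * n + 1"
  using assms sd_block_size_rotations[of n] sd_block_size_reflections[of n]
  by (simp_all add: sd_block_count_def sd_block_deg_def sd_center_step_def)

lemma class_quotient_mat_block_adj:
  fixes D s :: "nat \<Rightarrow> nat" and k :: nat
  defines "Q \<equiv> class_quotient_mat k (class_sombor_weight sd_block_adj D) s"
  shows "t < k \<Longrightarrow> Q $$ (t, t) = real (D t) * sqrt 2 * (real (s t) - 1)"
    and "t < k \<Longrightarrow> 0 < t \<Longrightarrow>
      Q $$ (0, t) * Q $$ (t, 0) = (real (D 0) ^ 2 + real (D t) ^ 2) * (real (s t) * real (s 0))"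
    and "t < k \<Longrightarrow> u < k \<Longrightarrow> 0 < t \<Longrightarrow> 0 < u \<Longrightarrow> t \<noteq> u \<Longrightarrow> Q $$ (t, u) = 0"
proof -
  show "t < k \<Longrightarrow> Q $$ (t, t) = real (D t) * sqrt 2 * (real (s t) - 1)"
    by (simp add: Q_def class_quotient_mat_def class_sombor_weight_diag sd_block_adj_def algebra_simps)
  have "sqrt (real (D 0) ^ 2 + real (D t) ^ 2) * sqrt (real (D t) ^ 2 + real (D 0) ^ 2)
      = real (D 0) ^ 2 + real (D t) ^ 2"
    by (simp add: add.commute)
  then show "t < k \<Longrightarrow> 0 < t \<Longrightarrow>
      Q $$ (0, t) * Q $$ (t, 0) = (real (D 0) ^ 2 + real (D t) ^ 2) * (real (s t) * real (s 0))"
    by (simp add: Q_def class_quotient_mat_def class_sombor_weight_def sd_block_adj_def)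
  show "t < k \<Longrightarrow> u < k \<Longrightarrow> 0 < t \<Longrightarrow> 0 < u \<Longrightarrow> t \<noteq> u \<Longrightarrow> Q $$ (t, u) = 0"
    by (simp add: Q_def class_quotient_mat_def class_sombor_weight_def sd_block_adj_def)
qed

lemma char_poly_sd_quotient_mat_odd:
  assumes n: "n \<ge> 2" and odd: "odd n"
  shows "char_poly (sd_quotient_mat n) =
          [: - (3 * (8 * real n - 1) * sqrt 2), 1 :]
             * [: - ((4 * real n - 1) * (4 * real n - 5) * sqrt 2), 1 :]
             * [: - ((4 * real n - 1) * (4 * real n + 3) * sqrt 2), 1 :]
           - Polynomial.smult (32 * (real n - 1) * (40 * (real n)^2 - 12 * real n + 1))
               [: - ((4 * real n - 1) * (4 * real n + 3) * sqrt 2), 1 :]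
           - Polynomial.smult (32 * real n * (40 * (real n)^2 + 4 * real n + 5))
               [: - ((4 * real n - 5) * (4 * real n - 1) * sqrt 2), 1 :]" (is "_ = ?rhs")
proof -
  let ?Q = "sd_quotient_mat n"
  note block_values = sd_block_values_odd[OF n odd]
  have k: "sd_block_count n = 3"
    by (fact block_values(1))
  have s: "real (sd_block_size n 0) = 4" "real (sd_block_size n 1) = 4 * real n - 4"
    "real (sd_block_size n 2) = 4 * real n"
    using n block_values by (simp_all add: of_nat_diff)
  have D: "real (sd_block_deg n 0) = 8 * real n - 1" "real (sd_block_deg n 1) = 4 * real n - 1"
    "real (sd_block_deg n 2) = 4 * real n + 3"
    using n block_values by (simp_all add: of_nat_diff)
  note Q = class_quotient_mat_block_adj[where k = "sd_block_count n" and D = "sd_block_deg n"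
      and s = "sd_block_size n", folded sd_quotient_mat_def, unfolded k]
  have carrier: "?Q \<in> carrier_mat 3 3"
    by (simp add: sd_quotient_mat_def class_quotient_mat_def k)
  have zero: "?Q $$ (1, 2) = 0" "?Q $$ (2, 1) = 0"
    by (rule Q(3); simp)+
  have diag: "?Q $$ (0, 0) = (8 * real n - 1) * sqrt 2 * (4 - 1)"
    "?Q $$ (1, 1) = (4 * real n - 1) * sqrt 2 * (4 * real n - 4 - 1)"
    "?Q $$ (2, 2) = (4 * real n + 3) * sqrt 2 * (4 * real n - 1)"
    using Q(1)[of 0] Q(1)[of 1] Q(1)[of 2] unfolding s D by simp_all
  have off: "?Q $$ (0, 1) * ?Q $$ (1, 0) = ((8 * real n - 1) ^ 2 + (4 * real n - 1) ^ 2) * ((4 * real n - 4) * 4)"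
    "?Q $$ (0, 2) * ?Q $$ (2, 0) = ((8 * real n - 1) ^ 2 + (4 * real n + 3) ^ 2) * (4 * real n * 4)"
    using Q(2)[of 1] Q(2)[of 2] unfolding s D by simp_all
  show ?thesis
  proof (rule poly_eqI_cofinite[of "{}"])
    show "poly (char_poly ?Q) x = poly ?rhs x" for x
      unfolding poly_char_poly_arrowhead_3[OF carrier zero] diag off
      by (simp add: algebra_simps power2_eq_square)
  qed simp
qed

lemma char_poly_sd_quotient_mat_even:
  assumes n: "n \<ge> 2" and even: "even n"
  shows "char_poly (sd_quotient_mat n) =
          [: - ((8 * real n - 1) * sqrt 2), 1 :]
             * [: - ((4 * real n - 1) * (4 * real n - 3) * sqrt 2), 1 :]
             * [: - ((2 * real n - 1) * (2 * real n + 1) * sqrt 2), 1 :] ^ 2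
           - Polynomial.smult (8 * (2 * real n - 1) * (40 * (real n)^2 - 12 * real n + 1))
               ([: - ((2 * real n - 1) * (2 * real n + 1) * sqrt 2), 1 :] ^ 2)
           - Polynomial.smult (16 * real n * (34 * (real n)^2 - 6 * real n + 1))
               ([: - ((4 * real n - 3) * (4 * real n - 1) * sqrt 2), 1 :]
                * [: - ((2 * real n - 1) * (2 * real n + 1) * sqrt 2), 1 :])" (is "_ = ?rhs")
proof -
  let ?Q = "sd_quotient_mat n"
  note block_values = sd_block_values_even[OF n even]
  have k: "sd_block_count n = 4"
    by (fact block_values(1))
  have s: "real (sd_block_size n 0) = 2" "real (sd_block_size n 1) = 4 * real n - 2"
    "real (sd_block_size n 2) = 2 * real n" "real (sd_block_size n 3) = 2 * real n"
    using n block_values by (simp_all add: of_nat_diff)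
  have D: "real (sd_block_deg n 0) = 8 * real n - 1" "real (sd_block_deg n 1) = 4 * real n - 1"
    "real (sd_block_deg n 2) = 2 * real n + 1" "real (sd_block_deg n 3) = 2 * real n + 1"
    using n block_values by (simp_all add: of_nat_diff)
  note Q = class_quotient_mat_block_adj[where k = "sd_block_count n" and D = "sd_block_deg n"
      and s = "sd_block_size n", folded sd_quotient_mat_def, unfolded k]
  have carrier: "?Q \<in> carrier_mat 4 4"
    by (simp add: sd_quotient_mat_def class_quotient_mat_def k)
  have zero: "?Q $$ (1, 2) = 0" "?Q $$ (1, 3) = 0" "?Q $$ (2, 1) = 0" "?Q $$ (2, 3) = 0"
    "?Q $$ (3, 1) = 0" "?Q $$ (3, 2) = 0"
    by (rule Q(3); simp)+
  have diag: "?Q $$ (0, 0) = (8 * real n - 1) * sqrt 2 * (2 - 1)"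
    "?Q $$ (1, 1) = (4 * real n - 1) * sqrt 2 * (4 * real n - 2 - 1)"
    "?Q $$ (2, 2) = (2 * real n + 1) * sqrt 2 * (2 * real n - 1)"
    "?Q $$ (3, 3) = (2 * real n + 1) * sqrt 2 * (2 * real n - 1)"
    using Q(1)[of 0] Q(1)[of 1] Q(1)[of 2] Q(1)[of 3] unfolding s D by simp_all
  have off: "?Q $$ (0, 1) * ?Q $$ (1, 0) = ((8 * real n - 1) ^ 2 + (4 * real n - 1) ^ 2) * ((4 * real n - 2) * 2)"
    "?Q $$ (0, 2) * ?Q $$ (2, 0) = ((8 * real n - 1) ^ 2 + (2 * real n + 1) ^ 2) * (2 * real n * 2)"
    "?Q $$ (0, 3) * ?Q $$ (3, 0) = ((8 * real n - 1) ^ 2 + (2 * real n + 1) ^ 2) * (2 * real n * 2)"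
    using Q(2)[of 1] Q(2)[of 2] Q(2)[of 3] unfolding s D by simp_all
  have sqrt2: "sqrt 2 * (sqrt 2 * c) = 2 * c" for c :: real
    by (simp flip: mult.assoc)
  show ?thesis
  proof (rule poly_eqI_cofinite[of "{}"])
    show "poly (char_poly ?Q) x = poly ?rhs x" for x
      unfolding poly_char_poly_arrowhead_4[OF carrier zero] diag off
      by (simp add: algebra_simps power2_eq_square sqrt2)
  qed simp
qed

lemma sd_diagonal_spectrum_odd:
  assumes n: "n \<ge> 2" and odd: "odd n"
  shows "(\<Sum>t<sd_block_count n. replicate_mset (sd_block_size n t - 1)
      (- complex_of_real (real (sd_block_deg n t) * sqrt 2)))
    = replicate_mset 3 (complex_of_real (- (8 * real n - 1) * sqrt 2))
      + replicate_mset (4*n - 5) (complex_of_real (- (4 * real n - 1) * sqrt 2))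
      + replicate_mset (4*n - 1) (complex_of_real (- (4 * real n + 3) * sqrt 2))"
proof -
  have "{..<3::nat} = {0, 1, 2}"
    by auto
  then show ?thesis
    using n sd_block_values_odd[OF n odd] by (simp add: of_nat_diff algebra_simps)
qed

lemma sd_diagonal_spectrum_even:
  assumes n: "n \<ge> 2" and even: "even n"
  shows "(\<Sum>t<sd_block_count n. replicate_mset (sd_block_size n t - 1)
      (- complex_of_real (real (sd_block_deg n t) * sqrt 2)))
    = replicate_mset (4*n - 2) (complex_of_real (- (2 * real n + 1) * sqrt 2))
      + replicate_mset (4*n - 3) (complex_of_real (- (4 * real n - 1) * sqrt 2))
      + replicate_mset 1 (complex_of_real (- (8 * real n - 1) * sqrt 2))"
proof -
  have "{..<4::nat} = {0, 1, 2, 3}"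
    by auto
  moreover have "replicate_mset (4 * n - 2) a = replicate_mset (2 * n - 1) a + replicate_mset (2 * n - 1) a"
    for a :: complex
  proof -
    have "4 * n - 2 = (2 * n - 1) + (2 * n - 1)"
      using n by simp
    then show ?thesis
      by (simp add: multiset_eqI)
  qed
  ultimately show ?thesis
    using n sd_block_values_even[OF n even] by (simp add: of_nat_diff ac_simps algebra_simps numeral_3_eq_3)
qed

theorem corollary4p7:
  fixes n :: nat
  assumes "n \<ge> 2"
  shows "(odd n \<longrightarrow>
      sombor_spectrum (csc_SD_vertices n) (sd_csc_adj n) =
        replicate_mset 3 (complex_of_real (- (8 * real n - 1) * sqrt 2))
      + replicate_mset (4*n - 5) (complex_of_real (- (4 * real n - 1) * sqrt 2))
      + replicate_mset (4*n - 1) (complex_of_real (- (4 * real n + 3) * sqrt 2))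
      + proots (map_poly complex_of_real
          ([: - (3 * (8 * real n - 1) * sqrt 2), 1 :]
             * [: - ((4 * real n - 1) * (4 * real n - 5) * sqrt 2), 1 :]
             * [: - ((4 * real n - 1) * (4 * real n + 3) * sqrt 2), 1 :]
           - Polynomial.smult (32 * (real n - 1) * (40 * (real n)^2 - 12 * real n + 1))
               [: - ((4 * real n - 1) * (4 * real n + 3) * sqrt 2), 1 :]
           - Polynomial.smult (32 * real n * (40 * (real n)^2 + 4 * real n + 5))
               [: - ((4 * real n - 5) * (4 * real n - 1) * sqrt 2), 1 :])))
    \<and> (even n \<longrightarrow>
      sombor_spectrum (csc_SD_vertices n) (sd_csc_adj n) =
        replicate_mset (4*n - 2) (complex_of_real (- (2 * real n + 1) * sqrt 2))
      + replicate_mset (4*n - 3) (complex_of_real (- (4 * real n - 1) * sqrt 2))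
      + replicate_mset 1 (complex_of_real (- (8 * real n - 1) * sqrt 2))
      + proots (map_poly complex_of_real
          ([: - ((8 * real n - 1) * sqrt 2), 1 :]
             * [: - ((4 * real n - 1) * (4 * real n - 3) * sqrt 2), 1 :]
             * [: - ((2 * real n - 1) * (2 * real n + 1) * sqrt 2), 1 :] ^ 2
           - Polynomial.smult (8 * (2 * real n - 1) * (40 * (real n)^2 - 12 * real n + 1))
               ([: - ((2 * real n - 1) * (2 * real n + 1) * sqrt 2), 1 :] ^ 2)
           - Polynomial.smult (16 * real n * (34 * (real n)^2 - 6 * real n + 1))
               ([: - ((4 * real n - 3) * (4 * real n - 1) * sqrt 2), 1 :]
                * [: - ((2 * real n - 1) * (2 * real n + 1) * sqrt 2), 1 :]))))"
  unfolding sombor_spectrum_csc_SD[OF assms]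
  using assms sd_diagonal_spectrum_odd sd_diagonal_spectrum_even
    char_poly_sd_quotient_mat_odd char_poly_sd_quotient_mat_even
  by simp

end
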